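(* Let $c>2$ be a real number. Suppose that every separating, union-closed finite collection of sets $\mathcal{A}$ containing at least one non-empty set and satisfying $|\mathcal{A}|\le c\cdot|U(\mathcal{A})|$ has an element of $U(\mathcal{A})$ belonging to at least half of the sets in $\mathcal{A}$. Then for every union-closed finite collection of sets $\mathcal{B}$ containing at least one non-empty set, there exists $x\in U(\mathcal{B})$ with $|x|_{\mathcal{B}}\ge \frac{c-2}{2(c-1)}\cdot|\mathcal{B}|$.
   Context: A collection $\mathcal{A}$ of sets is union-closed if $S,T\in\mathcal{A}$ implies $S\cup T\in\mathcal{A}$. The universe $U(\mathcal{A})$ is $\bigcup_{A\in\mathcal{A}}A$. $\mathcal{A}$ is separating if for any two distinct elements of $U(\mathcal{A})$ there is a set in $\mathcal{A}$ containing one of them but not the other. For an element $x$, $|x|_{\mathcal{B}}$ denotes the number of sets in $\mathcal{B}$ containing $x$. *)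

theory Defs
  imports Main Complex_Main
begin

definition union_closed :: "'a set set \<Rightarrow> bool" where
  "union_closed \<A> \<longleftrightarrow> (\<forall>S\<in>\<A>. \<forall>T\<in>\<A>. S \<union> T \<in> \<A>)"

definition universe :: "'a set set \<Rightarrow> 'a set" where
  "universe \<A> = \<Union>\<A>"

definition separating :: "'a set set \<Rightarrow> bool" where
  "separating \<A> \<longleftrightarrow>
     (\<forall>x\<in>universe \<A>. \<forall>y\<in>universe \<A>. x \<noteq> y \<longrightarrow>
        (\<exists>A\<in>\<A>. (x \<in> A \<and> y \<notin> A) \<or> (y \<in> A \<and> x \<notin> A)))"

definition freq :: "'a \<Rightarrow> 'a set set \<Rightarrow> nat" where
  "freq x \<B> = card {B \<in> \<B>. x \<in> B}"

end

theory Submission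
  imports Defs
begin

text \<open>Identifying elements that lie in exactly the same sets of \<open>\<B>\<close> yields an isomorphic
separating family with the same frequencies, relabelled onto \<open>{..<N}\<close>. Adding the \<open>k\<close>
nested sets \<open>{..a}\<close>, \<open>N \<le> a < N + k\<close>, keeps the family union-closed and separating, raises every
old frequency by \<open>k\<close> and gives the \<open>k\<close> new elements frequency at most \<open>k\<close>. With
\<open>k = \<lfloor>|\<B>| / (c - 1)\<rfloor>\<close> the extended family is small enough for the hypothesis, and an
element of frequency at least half of \<open>|\<B>| + k\<close> must be old, so its frequency in \<open>\<B>\<close> is at least
\<open>(|\<B>| - k) / 2 \<ge> (c - 2) / (2 (c - 1)) |\<B>|\<close>.\<close>

definition trace :: "'a set set \<Rightarrow> 'a \<Rightarrow> 'a set set" where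
  "trace \<B> x = {B \<in> \<B>. x \<in> B}"

definition trace_quotient :: "'a set set \<Rightarrow> ('a \<Rightarrow> 'b) \<Rightarrow> bool" where
  "trace_quotient \<B> \<phi> \<longleftrightarrow>
     (\<forall>x\<in>universe \<B>. \<forall>y\<in>universe \<B>. \<phi> x = \<phi> y \<longleftrightarrow> trace \<B> x = trace \<B> y)"

lemma union_closed_image_family:
  "union_closed \<B> \<Longrightarrow> union_closed (image \<phi> ` \<B>)"
  unfolding union_closed_def by (auto simp flip: image_Un)

lemma universe_image_family: "universe (image \<phi> ` \<B>) = \<phi> ` universe \<B>"
  by (auto simp: universe_def)

lemma trace_quotient_mem_image_iff:
  assumes "trace_quotient \<B> \<phi>" "x \<in> universe \<B>" "B \<in> \<B>"
  shows "\<phi> x \<in> \<phi> ` B \<longleftrightarrow> x \<in> B"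
proof
  assume "\<phi> x \<in> \<phi> ` B"
  then obtain y where "y \<in> B" "\<phi> x = \<phi> y" by auto
  moreover have "y \<in> universe \<B>" using \<open>y \<in> B\<close> \<open>B \<in> \<B>\<close> by (auto simp: universe_def)
  ultimately have "trace \<B> x = trace \<B> y"
    using assms(1,2) by (simp add: trace_quotient_def)
  then show "x \<in> B" using \<open>y \<in> B\<close> \<open>B \<in> \<B>\<close> by (auto simp: trace_def)
qed auto

lemma trace_quotient_inj_on_image:
  assumes "trace_quotient \<B> \<phi>"
  shows "inj_on (image \<phi>) \<B>"
proof (rule inj_onI)
  fix S T assume S: "S \<in> \<B>" and T: "T \<in> \<B>" and "\<phi> ` S = \<phi> ` T"
  have "x \<in> S \<longleftrightarrow> x \<in> T" if "x \<in> universe \<B>" for x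
    using trace_quotient_mem_image_iff[OF assms that S] trace_quotient_mem_image_iff[OF assms that T]
      \<open>\<phi> ` S = \<phi> ` T\<close> by simp
  moreover have "S \<subseteq> universe \<B>" "T \<subseteq> universe \<B>" using S T by (auto simp: universe_def)
  ultimately show "S = T" by blast
qed

lemma trace_quotient_freq_image:
  assumes "trace_quotient \<B> \<phi>" "x \<in> universe \<B>"
  shows "freq (\<phi> x) (image \<phi> ` \<B>) = freq x \<B>"
proof -
  have "{A \<in> image \<phi> ` \<B>. \<phi> x \<in> A} = image \<phi> ` {B \<in> \<B>. x \<in> B}"
    using trace_quotient_mem_image_iff[OF assms] by auto
  moreover have "inj_on (image \<phi>) {B \<in> \<B>. x \<in> B}"
    using trace_quotient_inj_on_image[OF assms(1)] by (rule inj_on_subset) auto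
  ultimately show ?thesis by (simp add: freq_def card_image)
qed

lemma trace_quotient_separating:
  assumes "trace_quotient \<B> \<phi>"
  shows "separating (image \<phi> ` \<B>)"
  unfolding separating_def universe_image_family
proof (intro ballI impI)
  fix x' y' assume "x' \<in> \<phi> ` universe \<B>" "y' \<in> \<phi> ` universe \<B>" "x' \<noteq> y'"
  then obtain x y where x: "x \<in> universe \<B>" "x' = \<phi> x" and y: "y \<in> universe \<B>" "y' = \<phi> y"
    by blast
  with \<open>x' \<noteq> y'\<close> assms have "trace \<B> x \<noteq> trace \<B> y"
    by (auto simp: trace_quotient_def)
  then obtain B where B: "B \<in> \<B>" "(x \<in> B \<and> y \<notin> B) \<or> (y \<in> B \<and> x \<notin> B)"
    by (auto simp: trace_def)
  then show "\<exists>A\<in>image \<phi> ` \<B>. (x' \<in> A \<and> y' \<notin> A) \<or> (y' \<in> A \<and> x' \<notin> A)"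
    using trace_quotient_mem_image_iff[OF assms x(1) B(1)]
      trace_quotient_mem_image_iff[OF assms y(1) B(1)] x(2) y(2) by blast
qed

lemma ex_trace_quotient_onto_nat:
  assumes "finite \<B>"
  obtains \<phi> :: "'a \<Rightarrow> nat" and N where "trace_quotient \<B> \<phi>" "\<phi> ` universe \<B> = {..<N}"
proof -
  have "finite (trace \<B> ` universe \<B>)"
    by (rule finite_subset[of _ "Pow \<B>"]) (auto simp: trace_def assms)
  then obtain g where g: "bij_betw g (trace \<B> ` universe \<B>) {..<card (trace \<B> ` universe \<B>)}"
    using ex_bij_betw_finite_nat atLeast0LessThan by metis
  then have "inj_on g (trace \<B> ` universe \<B>)" by (simp add: bij_betw_def)
  then have "trace_quotient \<B> (g \<circ> trace \<B>)"
    by (simp add: trace_quotient_def inj_on_eq_iff)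
  moreover have "(g \<circ> trace \<B>) ` universe \<B> = {..<card (trace \<B> ` universe \<B>)}"
    using g by (simp add: bij_betw_def image_comp)
  ultimately show thesis by (rule that)
qed

lemma ex_separating_nat_copy:
  assumes "finite \<B>" "union_closed \<B>"
  obtains \<A> :: "nat set set" and N
  where "finite \<A>" "union_closed \<A>" "separating \<A>" "universe \<A> = {..<N}"
    "card \<A> = card \<B>" "(\<exists>A\<in>\<A>. A \<noteq> {}) \<longleftrightarrow> (\<exists>B\<in>\<B>. B \<noteq> {})"
    "\<And>y. y < N \<Longrightarrow> \<exists>x\<in>universe \<B>. freq x \<B> = freq y \<A>"
proof -
  obtain \<phi> :: "'a \<Rightarrow> nat" and N where \<phi>: "trace_quotient \<B> \<phi>" "\<phi> ` universe \<B> = {..<N}"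
    using ex_trace_quotient_onto_nat[OF assms(1)] .
  show thesis
  proof (rule that[of "image \<phi> ` \<B>" N])
    show "finite (image \<phi> ` \<B>)" using assms(1) by simp
    show "union_closed (image \<phi> ` \<B>)" using assms(2) by (rule union_closed_image_family)
    show "separating (image \<phi> ` \<B>)" using \<phi>(1) by (rule trace_quotient_separating)
    show "universe (image \<phi> ` \<B>) = {..<N}" using \<phi>(2) by (simp add: universe_image_family)
    show "card (image \<phi> ` \<B>) = card \<B>"
      using trace_quotient_inj_on_image[OF \<phi>(1)] by (rule card_image)
    show "(\<exists>A\<in>image \<phi> ` \<B>. A \<noteq> {}) \<longleftrightarrow> (\<exists>B\<in>\<B>. B \<noteq> {})" by simp
    show "\<exists>x\<in>universe \<B>. freq x \<B> = freq y (image \<phi> ` \<B>)" if "y < N" for y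
      using that \<phi>(2) trace_quotient_freq_image[OF \<phi>(1)] by (metis imageE lessThan_iff)
  qed
qed

definition chain_extension :: "nat \<Rightarrow> nat \<Rightarrow> nat set set \<Rightarrow> nat set set" where
  "chain_extension N k \<A> = \<A> \<union> atMost ` {N..<N + k}"

lemma card_atMost_image: "card (atMost ` {N..<N + k}) = (k :: nat)"
proof -
  have "inj_on atMost {N..<N + k}" by (rule inj_onI) (simp add: atMost_eq_iff)
  then show ?thesis by (simp add: card_image)
qed

context
  fixes N k :: nat and \<A> :: "nat set set"
  assumes universe_\<A>: "universe \<A> = {..<N}"
begin

private lemma member_subset_lessThan: "A \<in> \<A> \<Longrightarrow> A \<subseteq> {..<N}"
  using universe_\<A> by (auto simp: universe_def)

private lemma disjoint_chain: "\<A> \<inter> atMost ` {N..<N + k} = {}"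
  using member_subset_lessThan by fastforce

lemma union_closed_chain_extension:
  assumes "union_closed \<A>"
  shows "union_closed (chain_extension N k \<A>)"
  unfolding union_closed_def
proof (intro ballI)
  fix S T assume "S \<in> chain_extension N k \<A>" "T \<in> chain_extension N k \<A>"
  then consider "S \<in> \<A>" "T \<in> \<A>"
    | a where "N \<le> a" "S = {..a}" "T \<in> \<A>"
    | b where "N \<le> b" "S \<in> \<A>" "T = {..b}"
    | a b where "a \<in> {N..<N + k}" "b \<in> {N..<N + k}" "S = {..a}" "T = {..b}"
    by (auto simp: chain_extension_def)
  then show "S \<union> T \<in> chain_extension N k \<A>"
  proof cases
    case 1
    then show ?thesis using assms by (simp add: union_closed_def chain_extension_def)
  next
    case 2
    then have "S \<union> T = S" using member_subset_lessThan[OF \<open>T \<in> \<A>\<close>] by auto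
    then show ?thesis using \<open>S \<in> chain_extension N k \<A>\<close> by simp
  next
    case 3
    then have "S \<union> T = T" using member_subset_lessThan[OF \<open>S \<in> \<A>\<close>] by auto
    then show ?thesis using \<open>T \<in> chain_extension N k \<A>\<close> by simp
  next
    case 4
    then have "S \<union> T = {..max a b}" by (auto simp: max_def)
    moreover have "max a b \<in> {N..<N + k}" using 4 by (simp add: max_def)
    ultimately show ?thesis by (simp add: chain_extension_def)
  qed
qed

lemma universe_chain_extension: "universe (chain_extension N k \<A>) = {..<N + k}"
proof -
  have "\<Union>(atMost ` {N..<N + k}) = {N..<N + k} \<union> \<Union>(atMost ` {N..<N + k})"
    by blast
  also have "{..<N} \<union> \<dots> = {..<N + k}" by (auto simp: not_less)
  finally show ?thesis using universe_\<A> by (simp add: chain_extension_def universe_def)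
qed

lemma separating_chain_extension:
  assumes "separating \<A>"
  shows "separating (chain_extension N k \<A>)"
proof -
  let ?E = "chain_extension N k \<A>"
  have cut_above: "\<exists>A\<in>?E. x \<in> A \<and> y \<notin> A" if "x < y" "N \<le> y" "y < N + k" for x y
  proof (cases "x < N")
    case True
    then obtain A where "A \<in> \<A>" "x \<in> A" using universe_\<A> by (auto simp: universe_def)
    moreover have "y \<notin> A" using member_subset_lessThan[OF \<open>A \<in> \<A>\<close>] \<open>N \<le> y\<close> by auto
    ultimately show ?thesis by (auto simp: chain_extension_def)
  next
    case False
    then have "{..x} \<in> ?E" using that by (simp add: chain_extension_def)
    then show ?thesis using \<open>x < y\<close> by auto
  qed
  have "\<exists>A\<in>?E. (x \<in> A \<and> y \<notin> A) \<or> (y \<in> A \<and> x \<notin> A)"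
    if "x < y" "y < N + k" for x y
  proof (cases "y < N")
    case True
    then have "x \<in> universe \<A>" "y \<in> universe \<A>" "x \<noteq> y"
      using \<open>x < y\<close> universe_\<A> by auto
    then obtain A where "A \<in> \<A>" "(x \<in> A \<and> y \<notin> A) \<or> (y \<in> A \<and> x \<notin> A)"
      using assms unfolding separating_def by blast
    then show ?thesis by (auto simp: chain_extension_def)
  next
    case False
    then show ?thesis using cut_above[OF \<open>x < y\<close> _ \<open>y < N + k\<close>] by auto
  qed
  then show ?thesis
    unfolding separating_def universe_chain_extension by (metis lessThan_iff linorder_neqE_nat)
qed

lemma card_chain_extension:
  assumes "finite \<A>"
  shows "card (chain_extension N k \<A>) = card \<A> + k"
  using card_Un_disjoint[OF assms _ disjoint_chain] by (simp add: chain_extension_def card_atMost_image)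

lemma freq_chain_extension_old:
  assumes "finite \<A>" "x < N"
  shows "freq x (chain_extension N k \<A>) = freq x \<A> + k"
proof -
  have "{A \<in> chain_extension N k \<A>. x \<in> A} = {A \<in> \<A>. x \<in> A} \<union> atMost ` {N..<N + k}"
    using assms(2) by (auto simp: chain_extension_def)
  then show ?thesis
    using card_Un_disjoint[of "{A \<in> \<A>. x \<in> A}" "atMost ` {N..<N + k}"] assms(1) disjoint_chain
    by (auto simp: freq_def card_atMost_image)
qed

lemma freq_chain_extension_new:
  assumes "x \<ge> N"
  shows "freq x (chain_extension N k \<A>) \<le> k"
proof -
  have "A \<notin> \<A>" if "x \<in> A" for A using member_subset_lessThan assms that by fastforce
  then have "{A \<in> chain_extension N k \<A>. x \<in> A} \<subseteq> atMost ` {N..<N + k}"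
    by (auto simp: chain_extension_def)
  then have "freq x (chain_extension N k \<A>) \<le> card (atMost ` {N..<N + k})"
    unfolding freq_def by (rule card_mono[rotated]) simp
  then show ?thesis by (simp add: card_atMost_image)
qed

end

lemma chain_length_choice:
  fixes c :: real and m N :: nat
  assumes "c > 2" "m \<ge> 1" "N \<ge> 1"
  obtains k :: nat where "k < m" "real (m + k) \<le> c * real (N + k)"
    "(c - 2) / (2 * (c - 1)) * real m \<le> (real m - real k) / 2"
proof -
  define k where "k = nat \<lfloor>real m / (c - 1)\<rfloor>"
  have "0 \<le> real m / (c - 1)" using assms(1) by simp
  then have lower: "real m / (c - 1) - 1 < real k" and upper: "real k \<le> real m / (c - 1)"
    unfolding k_def by linarith+
  show thesis
  proof (rule that)
    have "real m / (c - 1) < real m" using assms(1,2) by (simp add: divide_less_eq)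
    with upper show "k < m" by linarith
  next
    have "(c - 1) * (real m / (c - 1) - 1) = real m - (c - 1)"
      using assms(1) by (simp add: field_simps)
    then have "real m - (c - 1) < c * real k - real k"
      using mult_strict_left_mono[OF lower, of "c - 1"] assms(1) by (simp add: left_diff_distrib)
    moreover have "c \<le> c * real N" using assms(1,3) by simp
    ultimately show "real (m + k) \<le> c * real (N + k)" by (simp add: distrib_left)
  next
    have "(c - 2) / (2 * (c - 1)) * real m = (real m - real m / (c - 1)) / 2"
      using assms(1) by (simp add: field_simps)
    also have "\<dots> \<le> (real m - real k) / 2" using upper by (intro divide_right_mono) auto
    finally show "(c - 2) / (2 * (c - 1)) * real m \<le> (real m - real k) / 2" .
  qed
qed

theorem theorem2:
  fixes c :: real and \<B> :: "'a set set"
  assumes "c > 2"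
    and hyp: "\<And>\<A> :: nat set set.
               finite \<A> \<Longrightarrow> union_closed \<A> \<Longrightarrow> separating \<A> \<Longrightarrow>
               (\<exists>A\<in>\<A>. A \<noteq> {}) \<Longrightarrow>
               real (card \<A>) \<le> c * real (card (universe \<A>)) \<Longrightarrow>
               (\<exists>x\<in>universe \<A>. 2 * freq x \<A> \<ge> card \<A>)"
    and "finite \<B>" and "union_closed \<B>" and "\<exists>B\<in>\<B>. B \<noteq> {}"
  shows "\<exists>x\<in>universe \<B>. real (freq x \<B>) \<ge> (c - 2) / (2 * (c - 1)) * real (card \<B>)"
proof -
  obtain \<A> :: "nat set set" and N where \<A>: "finite \<A>" "union_closed \<A>" "separating \<A>"
    and univ: "universe \<A> = {..<N}" and "card \<A> = card \<B>" "\<exists>A\<in>\<A>. A \<noteq> {}"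
    and freq_\<A>: "\<And>y. y < N \<Longrightarrow> \<exists>x\<in>universe \<B>. freq x \<B> = freq y \<A>"
    using ex_separating_nat_copy[OF assms(3,4)] assms(5) by metis
  then have "N \<ge> 1" "card \<B> \<ge> 1"
    by (auto simp: universe_def Suc_le_eq card_gt_0_iff)
  then obtain k where k: "k < card \<B>" "real (card \<B> + k) \<le> c * real (N + k)"
    "(c - 2) / (2 * (c - 1)) * real (card \<B>) \<le> (real (card \<B>) - real k) / 2"
    using chain_length_choice[OF \<open>c > 2\<close>] by blast
  let ?E = "chain_extension N k \<A>"
  have "finite ?E" using \<A>(1) by (simp add: chain_extension_def)
  moreover have "union_closed ?E" "separating ?E"
    using union_closed_chain_extension[OF univ \<A>(2)] separating_chain_extension[OF univ \<A>(3)] .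
  moreover have "\<exists>A\<in>?E. A \<noteq> {}" using \<open>\<exists>A\<in>\<A>. A \<noteq> {}\<close> by (auto simp: chain_extension_def)
  moreover have "real (card ?E) \<le> c * real (card (universe ?E))"
    using k(2) \<open>card \<A> = card \<B>\<close>
    by (simp add: card_chain_extension[OF univ \<A>(1)] universe_chain_extension[OF univ])
  ultimately obtain y where y: "y < N + k" "2 * freq y ?E \<ge> card \<B> + k"
    using hyp[of ?E] \<open>card \<A> = card \<B>\<close>
    by (auto simp: card_chain_extension[OF univ \<A>(1)] universe_chain_extension[OF univ])
  have "y < N"
    using freq_chain_extension_new[OF univ, of y k] y(2) k(1) by (cases "y < N") auto
  then obtain x where "x \<in> universe \<B>" "freq x \<B> = freq y \<A>" using freq_\<A> by blast
  moreover have "freq y ?E = freq y \<A> + k" using freq_chain_extension_old[OF univ \<A>(1) \<open>y < N\<close>] .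
  ultimately have "real (card \<B> + k) \<le> real (2 * (freq x \<B> + k))"
    using y(2) by (intro of_nat_mono) simp
  then have "(real (card \<B>) - real k) / 2 \<le> real (freq x \<B>)" by simp
  with k(3) have "(c - 2) / (2 * (c - 1)) * real (card \<B>) \<le> real (freq x \<B>)" by linarith
  with \<open>x \<in> universe \<B>\<close> show ?thesis ..
qed

end
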